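(* Two zero-mean nonsingular Gaussian reciprocal sequences over $[0,N]$ share the same reciprocal model if and only if they share the same reciprocal $CM_L$ model.
   Context: $[0,N]=(0,1,\ldots,N)$; $x=[x_0',\ldots,x_N']'$, $C=\mathrm{Cov}(x)$, $'$ denotes transpose. A sequence $[x_k]$ is reciprocal if for all $j<k<l$ in $[0,N]$ the conditional distribution of $x_k$ given $x_0,\ldots,x_j,x_l,\ldots,x_N$ equals that given $x_j,x_l$. Reciprocal model: a zero-mean nonsingular Gaussian reciprocal sequence obeys $R^0_kx_k-R^-_kx_{k-1}-R^+_kx_{k+1}=e^R_k$, $k\in[1,N-1]$, with $R^0_k=A_k$, $R^+_k=-B_k$, $R^-_k=-B_{k-1}'$, where $A_k$ is the $(k,k)$ block and $B_k$ the $(k,k+1)$ block of $C^{-1}$; two sequences share the same reciprocal model if these coefficients for $k\in[1,N-1]$ coincide. Reciprocal $CM_L$ model: a reciprocal sequence obeys $x_k=G_{k,k-1}x_{k-1}+G_{k,N}x_N+e_k$, $k\in[1,N-1]$, where $G_{k,k-1}x_{k-1}+G_{k,N}x_N=E[x_k\mid x_0,\ldots,x_{k-1},x_N]$ and $[e_k]$ is a zero-mean white Gaussian sequence with $G_k=\mathrm{Cov}(e_k)$; two sequences share the same reciprocal $CM_L$ model if the coefficients $G_{k,k-1},G_{k,N},G_k$, $k\in[1,N-1]$, coincide. *)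

theory Defs
  imports "Jordan_Normal_Form.DL_Submatrix" "Jordan_Normal_Form.Gauss_Jordan_Elimination"
begin

text \<open>A zero-mean nonsingular Gaussian sequence x_0,...,x_N with x_k in R^d is described
by the covariance C = Cov(x) of the stacked vector x = [x_0',...,x_N']', an
((N+1)d) x ((N+1)d) real matrix; block k occupies coordinates k*d ..< (k+1)*d.\<close>

definition minv :: "real mat \<Rightarrow> real mat" where
  "minv M = the (mat_inverse M)"

definition blk :: "nat \<Rightarrow> nat \<Rightarrow> nat set" where
  "blk d k = {k * d ..< Suc k * d}"

definition blks :: "nat \<Rightarrow> nat set \<Rightarrow> nat set" where
  "blks d K = (\<Union>k\<in>K. blk d k)"

definition gauss_cov :: "nat \<Rightarrow> nat \<Rightarrow> real mat \<Rightarrow> bool" where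
  "gauss_cov N d C \<longleftrightarrow> C \<in> carrier_mat (Suc N * d) (Suc N * d) \<and> transpose_mat C = C \<and>
     (\<forall>v \<in> carrier_vec (Suc N * d). v \<noteq> 0\<^sub>v (Suc N * d) \<longrightarrow> v \<bullet> (C *\<^sub>v v) > 0)"

text \<open>For a Gaussian vector, the conditional distribution of x_I given x_S is
N(K x_S, P) with K = C_IS C_SS^{-1} and P = C_II - C_IS C_SS^{-1} C_SI.
cond_gain gives K as a linear map on the whole stacked vector x (zero columns
outside S); cond_cov gives P.\<close>
definition cond_gain :: "real mat \<Rightarrow> nat set \<Rightarrow> nat set \<Rightarrow> real mat" where
  "cond_gain C I S = submatrix C I S * minv (submatrix C S S) * submatrix (1\<^sub>m (dim_row C)) S UNIV"

definition cond_cov :: "real mat \<Rightarrow> nat set \<Rightarrow> nat set \<Rightarrow> real mat" where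
  "cond_cov C I S = submatrix C I I - submatrix C I S * minv (submatrix C S S) * submatrix C S I"

text \<open>Equality of the conditional distributions of x_I given x_S1 and given x_S2
(as Gaussian laws depending on the conditioning values).\<close>
definition same_cond_dist :: "real mat \<Rightarrow> nat set \<Rightarrow> nat set \<Rightarrow> nat set \<Rightarrow> bool" where
  "same_cond_dist C I S1 S2 \<longleftrightarrow>
     cond_gain C I S1 = cond_gain C I S2 \<and> cond_cov C I S1 = cond_cov C I S2"

definition reciprocal :: "nat \<Rightarrow> nat \<Rightarrow> real mat \<Rightarrow> bool" where
  "reciprocal N d C \<longleftrightarrow>
     (\<forall>j k l. j < k \<and> k < l \<and> l \<le> N \<longrightarrow>
        same_cond_dist C (blk d k) (blks d ({0..j} \<union> {l..N})) (blks d {j, l}))"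

definition blockA :: "nat \<Rightarrow> real mat \<Rightarrow> nat \<Rightarrow> real mat" where
  "blockA d C k = submatrix (minv C) (blk d k) (blk d k)"

definition blockB :: "nat \<Rightarrow> real mat \<Rightarrow> nat \<Rightarrow> real mat" where
  "blockB d C k = submatrix (minv C) (blk d k) (blk d (Suc k))"

definition R0 :: "nat \<Rightarrow> real mat \<Rightarrow> nat \<Rightarrow> real mat" where
  "R0 d C k = blockA d C k"

definition Rplus :: "nat \<Rightarrow> real mat \<Rightarrow> nat \<Rightarrow> real mat" where
  "Rplus d C k = - blockB d C k"

definition Rminus :: "nat \<Rightarrow> real mat \<Rightarrow> nat \<Rightarrow> real mat" where
  "Rminus d C k = - transpose_mat (blockB d C (k - 1))"

definition same_reciprocal_model :: "nat \<Rightarrow> nat \<Rightarrow> real mat \<Rightarrow> real mat \<Rightarrow> bool" where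
  "same_reciprocal_model N d C1 C2 \<longleftrightarrow>
     (\<forall>k \<in> {1 .. N - 1}. R0 d C1 k = R0 d C2 k \<and> Rplus d C1 k = Rplus d C2 k \<and>
                        Rminus d C1 k = Rminus d C2 k)"

text \<open>Reciprocal CM_L model: E[x_k | x_0..x_{k-1}, x_N] = G_{k,k-1} x_{k-1} + G_{k,N} x_N,
e_k = x_k - E[x_k | ...], G_k = Cov(e_k).\<close>
definition CML_cond :: "nat \<Rightarrow> nat \<Rightarrow> nat \<Rightarrow> nat set" where
  "CML_cond N d k = blks d ({0..<k} \<union> {N})"

definition G_prev :: "nat \<Rightarrow> nat \<Rightarrow> real mat \<Rightarrow> nat \<Rightarrow> real mat" where
  "G_prev N d C k = submatrix (cond_gain C (blk d k) (CML_cond N d k)) UNIV (blk d (k - 1))"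

definition G_last :: "nat \<Rightarrow> nat \<Rightarrow> real mat \<Rightarrow> nat \<Rightarrow> real mat" where
  "G_last N d C k = submatrix (cond_gain C (blk d k) (CML_cond N d k)) UNIV (blk d N)"

definition G_cov :: "nat \<Rightarrow> nat \<Rightarrow> real mat \<Rightarrow> nat \<Rightarrow> real mat" where
  "G_cov N d C k = cond_cov C (blk d k) (CML_cond N d k)"

definition same_CML_model :: "nat \<Rightarrow> nat \<Rightarrow> real mat \<Rightarrow> real mat \<Rightarrow> bool" where
  "same_CML_model N d C1 C2 \<longleftrightarrow>
     (\<forall>k \<in> {1 .. N - 1}. G_prev N d C1 k = G_prev N d C2 k \<and> G_last N d C1 k = G_last N d C2 k \<and>
                        G_cov N d C1 k = G_cov N d C2 k)"

end

theory Submission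
  imports Defs "Jordan_Normal_Form.Determinant"
begin

text \<open>For a Gaussian vector with covariance C and precision matrix P = C^-1, the law of x_I
  given x_S (I, S disjoint) is determined by the rows of P outside S; conversely, this law and the
  rows of P outside S and I determine the rows of P indexed by I.

  Reciprocity makes the interior block rows 1, ..., N - 1 of P block tridiagonal, so the
  reciprocal model, which lists their nonzero blocks, determines these rows, and hence every CM_L
  law: its conditioning set x_0, ..., x_(k-1), x_N leaves out only interior blocks. Conversely, by
  reciprocity the CM_L gain at k involves only x_(k-1) and x_N, so the CM_L model fixes the whole
  law of x_k given x_0, ..., x_(k-1), x_N, and a downward induction on k = N - 1, ..., 1 recovers
  the interior block rows of P, that is, the reciprocal model.\<close>

section \<open>Submatrices and selection matrices\<close>

lemma Collect_less_mem_eq: "S \<subseteq> {..<n} \<Longrightarrow> {i. i < n \<and> i \<in> S} = S"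
  by auto

lemma inj_on_pick: "inj_on (pick S) {..<card S}"
  by (rule inj_onI) (metis lessThan_iff nat_neq_iff pick_mono_le)

lemma bij_betw_pick:
  assumes "finite S" shows "bij_betw (pick S) {..<card S} S"
proof -
  have "pick S ` {..<card S} \<subseteq> S" using pick_in_set_le by auto
  moreover have "card (pick S ` {..<card S}) = card S"
    using card_image[OF inj_on_pick] by simp
  ultimately have "pick S ` {..<card S} = S" using card_subset_eq[OF assms] by simp
  with inj_on_pick show ?thesis unfolding bij_betw_def by blast
qed

lemma sum_reindex_pick:
  assumes "finite S" shows "sum f S = (\<Sum>b<card S. f (pick S b))"
  using sum.reindex_bij_betw[OF bij_betw_pick[OF assms], of f] by simp

lemma pick_surj:
  assumes "finite S" "i \<in> S" obtains b where "b < card S" "i = pick S b"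
proof -
  have "i \<in> pick S ` {..<card S}"
    using assms bij_betw_pick[OF assms(1)] unfolding bij_betw_def by simp
  with that show ?thesis by blast
qed

lemma pick_less: "S \<subseteq> {..<n} \<Longrightarrow> b < card S \<Longrightarrow> pick S b < n"
  using pick_in_set_le by auto

lemma sum_delta_left:
  fixes f :: "nat \<Rightarrow> 'a :: semiring_1"
  assumes "j < n" shows "(\<Sum>l<n. (if j = l then 1 else 0) * f l) = f j"
proof -
  have "(\<Sum>l<n. (if j = l then 1 else 0) * f l) = (\<Sum>l<n. if j = l then f l else 0)"
    by (rule sum.cong) auto
  with assms show ?thesis by simp
qed

lemma sum_delta_right:
  fixes f :: "nat \<Rightarrow> 'a :: semiring_1"
  assumes "j < n" shows "(\<Sum>l<n. f l * (if j = l then 1 else 0)) = f j"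
proof -
  have "(\<Sum>l<n. f l * (if j = l then 1 else 0)) = (\<Sum>l<n. if j = l then f l else 0)"
    by (rule sum.cong) auto
  with assms show ?thesis by simp
qed

lemma index_mult_mat_sum:
  assumes "A \<in> carrier_mat r m" "B \<in> carrier_mat m c" "i < r" "j < c"
  shows "(A * B) $$ (i, j) = (\<Sum>l<m. A $$ (i, l) * B $$ (l, j))"
  using assms by (auto simp: scalar_prod_def lessThan_atLeast0 intro!: sum.cong)

lemma submatrix_carrier_mat:
  assumes "A \<in> carrier_mat r c" "I \<subseteq> {..<r}" "J \<subseteq> {..<c}"
  shows "submatrix A I J \<in> carrier_mat (card I) (card J)"
  using assms by (auto simp: dim_submatrix Collect_less_mem_eq)

lemma submatrix_rows_carrier_mat:
  assumes "A \<in> carrier_mat r c" "I \<subseteq> {..<r}"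
  shows "submatrix A I UNIV \<in> carrier_mat (card I) c"
  using assms by (auto simp: dim_submatrix Collect_less_mem_eq)

lemma submatrix_cols_carrier_mat:
  assumes "A \<in> carrier_mat r c" "J \<subseteq> {..<c}"
  shows "submatrix A UNIV J \<in> carrier_mat r (card J)"
  using assms by (auto simp: dim_submatrix Collect_less_mem_eq)

lemma submatrix_index_pick:
  assumes "A \<in> carrier_mat r c" "I \<subseteq> {..<r}" "J \<subseteq> {..<c}" "i < card I" "j < card J"
  shows "submatrix A I J $$ (i, j) = A $$ (pick I i, pick J j)"
  using assms by (intro submatrix_index) (auto simp: Collect_less_mem_eq)

lemma submatrix_rows_index:
  assumes "A \<in> carrier_mat r c" "I \<subseteq> {..<r}" "i < card I" "j < c"
  shows "submatrix A I UNIV $$ (i, j) = A $$ (pick I i, j)"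
  using assms submatrix_index[of i A I j UNIV] by (auto simp: Collect_less_mem_eq pick_UNIV)

lemma submatrix_cols_index:
  assumes "A \<in> carrier_mat r c" "J \<subseteq> {..<c}" "i < r" "j < card J"
  shows "submatrix A UNIV J $$ (i, j) = A $$ (i, pick J j)"
  using assms submatrix_index[of i A UNIV j J] by (auto simp: Collect_less_mem_eq pick_UNIV)

lemma submatrix_eqI:
  assumes "A \<in> carrier_mat r c" "B \<in> carrier_mat r c" "I \<subseteq> {..<r}" "J \<subseteq> {..<c}"
    and "\<And>i j. i \<in> I \<Longrightarrow> j \<in> J \<Longrightarrow> A $$ (i, j) = B $$ (i, j)"
  shows "submatrix A I J = submatrix B I J"
  using submatrix_carrier_mat[OF assms(1,3,4)] submatrix_carrier_mat[OF assms(2,3,4)]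
    submatrix_index_pick[OF assms(1,3,4)] submatrix_index_pick[OF assms(2,3,4)]
    assms(5) pick_in_set_le
  by (intro eq_matI) auto

lemma submatrix_eqD:
  assumes "A \<in> carrier_mat r c" "B \<in> carrier_mat r c" "I \<subseteq> {..<r}" "J \<subseteq> {..<c}"
    and "submatrix A I J = submatrix B I J" "i \<in> I" "j \<in> J"
  shows "A $$ (i, j) = B $$ (i, j)"
proof -
  obtain a where "a < card I" "i = pick I a"
    using pick_surj[OF finite_subset[OF assms(3) finite_lessThan] assms(6)] by auto
  moreover obtain b where "b < card J" "j = pick J b"
    using pick_surj[OF finite_subset[OF assms(4) finite_lessThan] assms(7)] by auto
  ultimately show ?thesis
    using assms(5) submatrix_index_pick[OF assms(1,3,4)] submatrix_index_pick[OF assms(2,3,4)] by metis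
qed

lemma submatrix_cols_eqD:
  assumes "A \<in> carrier_mat r c" "B \<in> carrier_mat r c" "J \<subseteq> {..<c}"
    and "submatrix A UNIV J = submatrix B UNIV J" "i < r" "j \<in> J"
  shows "A $$ (i, j) = B $$ (i, j)"
proof -
  obtain b where "b < card J" "j = pick J b"
    using pick_surj[OF finite_subset[OF assms(3) finite_lessThan] assms(6)] by auto
  then show ?thesis
    using assms(4,5) submatrix_cols_index[OF assms(1,3)] submatrix_cols_index[OF assms(2,3)] by metis
qed

abbreviation sel_mat :: "nat \<Rightarrow> nat set \<Rightarrow> real mat" where
  "sel_mat n S \<equiv> submatrix (1\<^sub>m n) S UNIV"

lemma sel_mat_carrier: "S \<subseteq> {..<n} \<Longrightarrow> sel_mat n S \<in> carrier_mat (card S) n"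
  by (rule submatrix_rows_carrier_mat) auto

lemma sel_mat_index:
  assumes "S \<subseteq> {..<n}" "l < card S" "j < n"
  shows "sel_mat n S $$ (l, j) = (if pick S l = j then 1 else 0)"
  using submatrix_rows_index[OF one_carrier_mat assms] pick_less[OF assms(1,2)] assms(3) by simp

lemma sel_mat_mult:
  fixes A :: "real mat"
  assumes S: "S \<subseteq> {..<n}" and A: "A \<in> carrier_mat n c"
  shows "sel_mat n S * A = submatrix A S UNIV"
proof (rule eq_matI)
  fix i j assume "i < dim_row (submatrix A S UNIV)" "j < dim_col (submatrix A S UNIV)"
  then have i: "i < card S" and j: "j < c" using submatrix_rows_carrier_mat[OF A S] by auto
  have "(sel_mat n S * A) $$ (i, j) = (\<Sum>l<n. sel_mat n S $$ (i, l) * A $$ (l, j))"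
    using index_mult_mat_sum[OF sel_mat_carrier[OF S] A i j] .
  also have "\<dots> = (\<Sum>l<n. (if pick S i = l then 1 else 0) * A $$ (l, j))"
    by (intro sum.cong) (simp_all add: sel_mat_index[OF S i])
  also have "\<dots> = submatrix A S UNIV $$ (i, j)"
    using sum_delta_left[OF pick_less[OF S i]] submatrix_rows_index[OF A S i j] by simp
  finally show "(sel_mat n S * A) $$ (i, j) = submatrix A S UNIV $$ (i, j)" .
qed (use sel_mat_carrier[OF S] submatrix_rows_carrier_mat[OF A S] A in auto)

lemma mult_sel_mat_transpose:
  fixes A :: "real mat"
  assumes S: "S \<subseteq> {..<n}" and A: "A \<in> carrier_mat r n"
  shows "A * transpose_mat (sel_mat n S) = submatrix A UNIV S"
proof (rule eq_matI)
  fix i j assume "i < dim_row (submatrix A UNIV S)" "j < dim_col (submatrix A UNIV S)"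
  then have i: "i < r" and j: "j < card S" using submatrix_cols_carrier_mat[OF A S] by auto
  have "(A * transpose_mat (sel_mat n S)) $$ (i, j) = (\<Sum>l<n. A $$ (i, l) * transpose_mat (sel_mat n S) $$ (l, j))"
    using index_mult_mat_sum[OF A transpose_carrier_mat[THEN iffD2, OF sel_mat_carrier[OF S]] i j] .
  also have "\<dots> = (\<Sum>l<n. A $$ (i, l) * (if pick S j = l then 1 else 0))"
    using carrier_matD[OF sel_mat_carrier[OF S]] j
    by (intro sum.cong) (simp_all add: sel_mat_index[OF S j])
  also have "\<dots> = submatrix A UNIV S $$ (i, j)"
    using sum_delta_right[OF pick_less[OF S j]] submatrix_cols_index[OF A S i j] by simp
  finally show "(A * transpose_mat (sel_mat n S)) $$ (i, j) = submatrix A UNIV S $$ (i, j)" .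
qed (use sel_mat_carrier[OF S] submatrix_cols_carrier_mat[OF A S] A in auto)

lemma sel_mat_sandwich:
  fixes A :: "real mat"
  assumes "A \<in> carrier_mat n n" "I \<subseteq> {..<n}" "J \<subseteq> {..<n}"
  shows "sel_mat n I * A * transpose_mat (sel_mat n J) = submatrix A I J"
proof -
  have "sel_mat n I * A * transpose_mat (sel_mat n J) = sel_mat n I * (A * transpose_mat (sel_mat n J))"
    using assoc_mult_mat[OF sel_mat_carrier[OF assms(2)] assms(1) transpose_carrier_mat[THEN iffD2, OF sel_mat_carrier[OF assms(3)]]] .
  also have "\<dots> = submatrix (submatrix A UNIV J) I UNIV"
    using mult_sel_mat_transpose[OF assms(3,1)] sel_mat_mult[OF assms(2) submatrix_cols_carrier_mat[OF assms(1,3)]]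
    by simp
  finally show ?thesis by (simp only: submatrix_split[symmetric])
qed

lemma submatrix_one_mat:
  assumes S: "S \<subseteq> {..<n}" shows "submatrix (1\<^sub>m n) S S = (1\<^sub>m (card S) :: 'a :: {zero, one} mat)"
proof (rule eq_matI)
  fix i j assume "i < dim_row (1\<^sub>m (card S) :: 'a mat)" "j < dim_col (1\<^sub>m (card S) :: 'a mat)"
  then have i: "i < card S" and j: "j < card S" by auto
  then have "pick S i = pick S j \<longleftrightarrow> i = j"
    using inj_on_pick[of S] by (auto dest: inj_onD)
  then show "submatrix (1\<^sub>m n) S S $$ (i, j) = (1\<^sub>m (card S) :: 'a mat) $$ (i, j)"
    using submatrix_index_pick[OF one_carrier_mat S S i j] pick_less[OF S] i j by simp
qed (use submatrix_carrier_mat[OF one_carrier_mat S S] in auto)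

section \<open>Positive definite matrices\<close>

definition pos_def_mat :: "nat \<Rightarrow> real mat \<Rightarrow> bool" where
  "pos_def_mat n C \<longleftrightarrow> C \<in> carrier_mat n n \<and> transpose_mat C = C \<and>
     (\<forall>v \<in> carrier_vec n. v \<noteq> 0\<^sub>v n \<longrightarrow> v \<bullet> (C *\<^sub>v v) > 0)"

lemma gauss_cov_iff_pos_def_mat: "gauss_cov N d C \<longleftrightarrow> pos_def_mat (Suc N * d) C"
  unfolding gauss_cov_def pos_def_mat_def ..

lemma pos_def_mat_carrier: "pos_def_mat n C \<Longrightarrow> C \<in> carrier_mat n n"
  unfolding pos_def_mat_def by simp

lemma pos_def_mat_sym:
  assumes "pos_def_mat n C" "i < n" "j < n" shows "C $$ (i, j) = C $$ (j, i)"
  using assms unfolding pos_def_mat_def by (metis carrier_matD index_transpose_mat(1))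

lemma pos_def_mat_mult_vec_eq_0:
  assumes "pos_def_mat n C" "v \<in> carrier_vec n" "C *\<^sub>v v = 0\<^sub>v n" shows "v = 0\<^sub>v n"
  using assms unfolding pos_def_mat_def by force

lemma minv_if_injective:
  fixes A :: "real mat"
  assumes A: "A \<in> carrier_mat n n"
    and inj: "\<And>v. v \<in> carrier_vec n \<Longrightarrow> A *\<^sub>v v = 0\<^sub>v n \<Longrightarrow> v = 0\<^sub>v n"
  shows "A * minv A = 1\<^sub>m n" "minv A * A = 1\<^sub>m n" "minv A \<in> carrier_mat n n"
proof -
  have "det A \<noteq> 0"
    using det_0_iff_vec_prod_zero[OF A] inj by auto
  then have "A \<in> Units (ring_mat TYPE(real) n n)"
    using det_non_zero_imp_unit[OF A] by simp
  then obtain B where "mat_inverse A = Some B"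
    using mat_inverse(1)[OF A] by fastforce
  then show "A * minv A = 1\<^sub>m n" "minv A * A = 1\<^sub>m n" "minv A \<in> carrier_mat n n"
    using mat_inverse(2)[OF A] unfolding minv_def by auto
qed

lemma pos_def_mat_minv_inverse:
  assumes "pos_def_mat n C"
  shows "C * minv C = 1\<^sub>m n" "minv C * C = 1\<^sub>m n" "minv C \<in> carrier_mat n n"
  using minv_if_injective[OF pos_def_mat_carrier[OF assms] pos_def_mat_mult_vec_eq_0[OF assms]] by auto

lemma pos_def_mat_minv:
  assumes pd: "pos_def_mat n C" shows "pos_def_mat n (minv C)"
proof -
  note C = pos_def_mat_carrier[OF pd] and inv = pos_def_mat_minv_inverse[OF pd]
  have sym: "transpose_mat C = C" using pd unfolding pos_def_mat_def by simp
  have "transpose_mat (minv C) = transpose_mat (minv C) * (C * minv C)"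
    using inv by simp
  also have "\<dots> = transpose_mat (C * minv C) * minv C"
    using assoc_mult_mat[of "transpose_mat (minv C)" n n C n "minv C" n] transpose_mult[OF C inv(3)] sym inv(3) C
    by simp
  also have "\<dots> = minv C" using inv by simp
  finally have "transpose_mat (minv C) = minv C" .
  moreover have "v \<bullet> (minv C *\<^sub>v v) > 0" if v: "v \<in> carrier_vec n" "v \<noteq> 0\<^sub>v n" for v
  proof -
    define w where "w = minv C *\<^sub>v v"
    have w: "w \<in> carrier_vec n" unfolding w_def using inv(3) v by simp
    have Cw: "C *\<^sub>v w = v" unfolding w_def using assoc_mult_mat_vec[OF C inv(3) v(1), symmetric] inv(1) v by simp
    then have "w \<noteq> 0\<^sub>v n" using v C by auto
    then have "w \<bullet> (C *\<^sub>v w) > 0" using pd w unfolding pos_def_mat_def by blast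
    then show ?thesis using comm_scalar_prod[of "C *\<^sub>v w" n w] C w Cw v unfolding w_def[symmetric] by simp
  qed
  ultimately show ?thesis unfolding pos_def_mat_def using inv(3) by blast
qed

lemma pos_def_mat_principal_submatrix:
  assumes pd: "pos_def_mat n C" and S: "S \<subseteq> {..<n}"
  shows "pos_def_mat (card S) (submatrix C S S)"
proof -
  note C = pos_def_mat_carrier[OF pd]
  have E: "sel_mat n S \<in> carrier_mat (card S) n" by (rule sel_mat_carrier[OF S])
  have CSS: "submatrix C S S \<in> carrier_mat (card S) (card S)" by (rule submatrix_carrier_mat[OF C S S])
  have "transpose_mat (submatrix C S S) = submatrix C S S"
    using CSS submatrix_index_pick[OF C S S] pos_def_mat_sym[OF pd] pick_less[OF S]
    by (intro eq_matI) auto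
  moreover have "v \<bullet> (submatrix C S S *\<^sub>v v) > 0" if v: "v \<in> carrier_vec (card S)" "v \<noteq> 0\<^sub>v (card S)" for v
  proof -
    have Et: "transpose_mat (sel_mat n S) \<in> carrier_mat n (card S)" using E by simp
    have EEt: "sel_mat n S * transpose_mat (sel_mat n S) = (1\<^sub>m (card S) :: real mat)"
      using sel_mat_sandwich[OF one_carrier_mat S S] submatrix_one_mat[OF S] right_mult_one_mat[OF E] by simp
    define u where "u = transpose_mat (sel_mat n S) *\<^sub>v v"
    have u: "u \<in> carrier_vec n" unfolding u_def using Et v by simp
    have "sel_mat n S *\<^sub>v u = v"
      unfolding u_def using assoc_mult_mat_vec[OF E Et v(1), symmetric] v by (simp add: EEt)
    then have "u \<noteq> 0\<^sub>v n" using v E by auto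
    then have pos: "u \<bullet> (C *\<^sub>v u) > 0" using pd u unfolding pos_def_mat_def by blast
    have "submatrix C S S *\<^sub>v v = sel_mat n S *\<^sub>v (C *\<^sub>v u)"
      unfolding u_def sel_mat_sandwich[OF C S S, symmetric]
      using assoc_mult_mat_vec[OF mult_carrier_mat[OF E C] Et v(1)] E C Et v by simp
    then have "v \<bullet> (submatrix C S S *\<^sub>v v) = u \<bullet> (C *\<^sub>v u)"
      using transpose_vec_mult_scalar[OF E _ v(1), of "C *\<^sub>v u"] C u unfolding u_def by simp
    with pos show ?thesis by simp
  qed
  ultimately show ?thesis unfolding pos_def_mat_def using CSS by blast
qed

definition quad_form :: "nat \<Rightarrow> real mat \<Rightarrow> (nat \<Rightarrow> real) \<Rightarrow> real" where
  "quad_form n M u = (\<Sum>i<n. u i * (\<Sum>j<n. M $$ (i, j) * u j))"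

lemma pos_def_mat_quad_form_eq_0:
  assumes pd: "pos_def_mat n M" and q: "quad_form n M u = 0" and i: "i < n"
  shows "u i = 0"
proof (rule ccontr)
  assume "u i \<noteq> 0"
  then have "vec n u \<noteq> 0\<^sub>v n" using i by (metis index_vec index_zero_vec(1))
  then have "vec n u \<bullet> (M *\<^sub>v vec n u) > 0" using pd unfolding pos_def_mat_def by auto
  moreover have "vec n u \<bullet> (M *\<^sub>v vec n u) = quad_form n M u"
    using pos_def_mat_carrier[OF pd]
    by (simp add: quad_form_def scalar_prod_def lessThan_atLeast0 row_def)
  ultimately show False using q by simp
qed

text \<open>Equivalently: the principal submatrix of M on T is nonsingular.\<close>
lemma pos_def_mat_supported_kernel:
  assumes pd: "pos_def_mat n M"
    and supp: "\<And>j. j < n \<Longrightarrow> j \<notin> T \<Longrightarrow> u j = 0"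
    and ker: "\<And>t. t < n \<Longrightarrow> t \<in> T \<Longrightarrow> (\<Sum>l<n. M $$ (t, l) * u l) = 0"
    and i: "i < n"
  shows "u i = 0"
proof -
  have "quad_form n M u = 0"
    unfolding quad_form_def using supp ker by (intro sum.neutral) (metis lessThan_iff mult_eq_0_iff)
  then show ?thesis using pos_def_mat_quad_form_eq_0[OF pd _ i] by simp
qed

section \<open>Conditioning a Gaussian vector\<close>

text \<open>Cross covariance Cov(e, x) of the innovation e = x_I - E[x_I | x_S] with x.\<close>
definition innov_xcov :: "real mat \<Rightarrow> nat set \<Rightarrow> nat set \<Rightarrow> real mat" where
  "innov_xcov C I S = (sel_mat (dim_row C) I - cond_gain C I S) * C"

locale gauss_cond =
  fixes n :: nat and C :: "real mat" and S I :: "nat set"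
  assumes pd: "pos_def_mat n C"
    and S_sub: "S \<subseteq> {..<n}" and I_sub: "I \<subseteq> {..<n}" and disjoint: "S \<inter> I = {}"
begin

abbreviation "K \<equiv> submatrix C I S * minv (submatrix C S S)"
abbreviation "G \<equiv> cond_gain C I S"
abbreviation "V \<equiv> cond_cov C I S"
abbreviation "W \<equiv> sel_mat n I - G"
abbreviation "Y \<equiv> innov_xcov C I S"

lemma C_carrier: "C \<in> carrier_mat n n"
  using pos_def_mat_carrier[OF pd] .

lemma precision_sym: "i < n \<Longrightarrow> j < n \<Longrightarrow> minv C $$ (i, j) = minv C $$ (j, i)"
  using pos_def_mat_sym[OF pos_def_mat_minv[OF pd]] .

lemma obtain_pick_I:
  assumes "i \<in> I" obtains b where "b < card I" "i = pick I b"
  using pick_surj[OF finite_subset[OF I_sub finite_lessThan] assms] by blast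

lemma K_carrier: "K \<in> carrier_mat (card I) (card S)"
  using submatrix_carrier_mat[OF C_carrier I_sub S_sub]
    pos_def_mat_minv_inverse(3)[OF pos_def_mat_principal_submatrix[OF pd S_sub]] by simp

lemma K_mult_cov: "K * submatrix C S S = submatrix C I S"
proof -
  note inv = pos_def_mat_minv_inverse[OF pos_def_mat_principal_submatrix[OF pd S_sub]]
  have "K * submatrix C S S = submatrix C I S * (minv (submatrix C S S) * submatrix C S S)"
    using submatrix_carrier_mat[OF C_carrier I_sub S_sub] inv(3) submatrix_carrier_mat[OF C_carrier S_sub S_sub]
    by (rule assoc_mult_mat)
  also have "\<dots> = submatrix C I S"
    using inv(2) submatrix_carrier_mat[OF C_carrier I_sub S_sub] by simp
  finally show ?thesis .
qed

lemma gain_eq: "G = K * sel_mat n S"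
  unfolding cond_gain_def using C_carrier by simp

lemma cov_eq: "V = submatrix C I I - K * submatrix C S I"
  unfolding cond_cov_def ..

lemma xcov_eq: "Y = W * C"
  unfolding innov_xcov_def using C_carrier by simp

lemma gain_carrier: "G \<in> carrier_mat (card I) n"
  unfolding gain_eq using K_carrier sel_mat_carrier[OF S_sub] by simp

lemma cov_carrier: "V \<in> carrier_mat (card I) (card I)"
  unfolding cov_eq using minus_carrier_mat[OF mult_carrier_mat[OF K_carrier submatrix_carrier_mat[OF C_carrier S_sub I_sub]]] .

lemma innov_carrier: "W \<in> carrier_mat (card I) n"
  using minus_carrier_mat[OF gain_carrier] .

lemma xcov_carrier: "Y \<in> carrier_mat (card I) n"
  unfolding xcov_eq using innov_carrier C_carrier by simp

lemma gain_eq_0: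
  assumes a: "a < card I" and j: "j < n" and jS: "j \<notin> S"
  shows "G $$ (a, j) = 0"
proof -
  have "G $$ (a, j) = (\<Sum>l<card S. K $$ (a, l) * sel_mat n S $$ (l, j))"
    unfolding gain_eq using index_mult_mat_sum[OF K_carrier sel_mat_carrier[OF S_sub] a j] .
  also have "\<dots> = 0"
    using sel_mat_index[OF S_sub _ j] pick_in_set_le jS by (intro sum.neutral) force
  finally show ?thesis .
qed

lemma innov_index:
  assumes "a < card I" "j < n"
  shows "W $$ (a, j) = (if pick I a = j then 1 else 0) - G $$ (a, j)"
  using assms sel_mat_index[OF I_sub assms] sel_mat_carrier[OF I_sub] gain_carrier by simp

lemma xcov_sel_mat_transpose:
  assumes J: "J \<subseteq> {..<n}"
  shows "Y * transpose_mat (sel_mat n J) = submatrix C I J - K * submatrix C S J"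
proof -
  have EJ: "transpose_mat (sel_mat n J) \<in> carrier_mat n (card J)" using sel_mat_carrier[OF J] by simp
  have "G * C * transpose_mat (sel_mat n J) = K * (sel_mat n S * C * transpose_mat (sel_mat n J))"
    unfolding gain_eq using K_carrier sel_mat_carrier[OF S_sub] C_carrier EJ
    by (simp add: assoc_mult_mat[of _ "card I" "card S" _ n _ "card J"])
  then have "G * C * transpose_mat (sel_mat n J) = K * submatrix C S J"
    using sel_mat_sandwich[OF C_carrier S_sub J] by simp
  moreover have "Y * transpose_mat (sel_mat n J) =
      sel_mat n I * C * transpose_mat (sel_mat n J) - G * C * transpose_mat (sel_mat n J)"
    unfolding xcov_eq using sel_mat_carrier[OF I_sub] gain_carrier C_carrier EJ
    by (simp add: minus_mult_distrib_mat[of _ "card I" n])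
  ultimately show ?thesis using sel_mat_sandwich[OF C_carrier I_sub J] by simp
qed

text \<open>Orthogonality principle: the innovation is uncorrelated with x_S.\<close>
lemma xcov_eq_0:
  assumes a: "a < card I" and s: "s \<in> S"
  shows "Y $$ (a, s) = 0"
proof -
  obtain t where t: "t < card S" "s = pick S t"
    using pick_surj[OF finite_subset[OF S_sub finite_lessThan] s] by auto
  have "submatrix Y UNIV S = 0\<^sub>m (card I) (card S)"
    using mult_sel_mat_transpose[OF S_sub xcov_carrier] xcov_sel_mat_transpose[OF S_sub] K_mult_cov
      submatrix_carrier_mat[OF C_carrier I_sub S_sub] by simp
  then show ?thesis
    using submatrix_cols_index[OF xcov_carrier S_sub a t(1)] a t by simp
qed

lemma xcov_pick:
  assumes a: "a < card I" and b: "b < card I"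
  shows "Y $$ (a, pick I b) = V $$ (a, b)"
proof -
  have "submatrix Y UNIV I = V"
    using mult_sel_mat_transpose[OF I_sub xcov_carrier] xcov_sel_mat_transpose[OF I_sub] cov_eq by simp
  then show ?thesis
    using submatrix_cols_index[OF xcov_carrier I_sub a b] by simp
qed

text \<open>Read off from Y C^-1 = W.\<close>
lemma precision_xcov:
  assumes a: "a < card I" and j: "j < n"
  shows "(\<Sum>l<n. minv C $$ (j, l) * Y $$ (a, l)) = W $$ (a, j)"
proof -
  note inv = pos_def_mat_minv_inverse[OF pd]
  have "W = Y * minv C"
    unfolding xcov_eq using assoc_mult_mat[OF innov_carrier C_carrier inv(3)] inv(1) right_mult_one_mat[OF innov_carrier]
    by simp
  then have "W $$ (a, j) = (\<Sum>l<n. Y $$ (a, l) * minv C $$ (l, j))"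
    using index_mult_mat_sum[OF xcov_carrier inv(3) a j] by simp
  also have "\<dots> = (\<Sum>l<n. minv C $$ (j, l) * Y $$ (a, l))"
    using precision_sym[OF _ j] by (intro sum.cong) auto
  finally show ?thesis by simp
qed

lemma gain_index:
  assumes a: "a < card I" and j: "j < n"
  shows "G $$ (a, j) = (if pick I a = j then 1 else 0) - (\<Sum>l\<in>{..<n} - S. minv C $$ (l, j) * Y $$ (a, l))"
proof -
  have "W $$ (a, j) = (\<Sum>l<n. minv C $$ (l, j) * Y $$ (a, l))"
    using precision_xcov[OF a j] precision_sym[OF j] by (auto intro!: sum.cong)
  also have "\<dots> = (\<Sum>l\<in>{..<n} - S. minv C $$ (l, j) * Y $$ (a, l))"
    using xcov_eq_0[OF a] by (intro sum.mono_neutral_right) auto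
  finally show ?thesis using innov_index[OF a j] by simp
qed

lemma xcov_index:
  assumes a: "a < card I" and i: "i < n"
  shows "Y $$ (a, i) = (\<Sum>j<n. C $$ (i, j) * W $$ (a, j))"
  unfolding xcov_eq using index_mult_mat_sum[OF innov_carrier C_carrier a i] pos_def_mat_sym[OF pd _ i]
  by (auto intro!: sum.cong)

lemma pick_I_less: "b < card I \<Longrightarrow> pick I b < n"
  using pick_less[OF I_sub] .

lemma pick_I_notin_S: "b < card I \<Longrightarrow> pick I b \<notin> S"
  using pick_in_set_le[of b I] disjoint by auto

lemma innov_pick:
  assumes "a < card I" "b < card I"
  shows "W $$ (a, pick I b) = (if a = b then 1 else 0)"
  using innov_index[OF assms(1) pick_I_less[OF assms(2)]] gain_eq_0[OF assms(1) pick_I_less pick_I_notin_S]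
    inj_on_pick[of I] assms by (auto dest: inj_onD)

lemma sum_innov:
  assumes a: "a < card I" and f: "\<And>s. s \<in> S \<Longrightarrow> f s = 0"
  shows "(\<Sum>i<n. W $$ (a, i) * f i) = f (pick I a)"
proof -
  have "(\<Sum>i<n. W $$ (a, i) * f i) = (\<Sum>i<n. (if pick I a = i then 1 else 0) * f i)"
    using innov_index[OF a] gain_eq_0[OF a] f by (intro sum.cong) auto
  then show ?thesis using sum_delta_left[OF pick_I_less[OF a]] by simp
qed

lemma sum_xcov:
  assumes a: "a < card I" and f: "\<And>l. l < n \<Longrightarrow> l \<notin> I \<Longrightarrow> f l * Y $$ (a, l) = 0"
  shows "(\<Sum>l<n. f l * Y $$ (a, l)) = (\<Sum>b<card I. f (pick I b) * V $$ (a, b))"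
proof -
  have "(\<Sum>l<n. f l * Y $$ (a, l)) = (\<Sum>l\<in>I. f l * Y $$ (a, l))"
    by (rule sum.mono_neutral_right) (use I_sub f in auto)
  also have "\<dots> = (\<Sum>b<card I. f (pick I b) * Y $$ (a, pick I b))"
    using sum_reindex_pick[OF finite_subset[OF I_sub finite_lessThan]] .
  also have "\<dots> = (\<Sum>b<card I. f (pick I b) * V $$ (a, b))"
    by (rule sum.cong) (simp_all add: xcov_pick[OF a])
  finally show ?thesis .
qed

text \<open>The innovation covariance V is nonsingular: if V x = 0 then v = W' x satisfies
  v' C v = x' V x = 0.\<close>
lemma cov_kernel:
  assumes x: "\<And>a. a < card I \<Longrightarrow> (\<Sum>b<card I. V $$ (a, b) * x b) = 0" and b: "b < card I"
  shows "x b = 0"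
proof -
  define v where "v j = (\<Sum>a<card I. x a * W $$ (a, j))" for j
  define q where "q i = (\<Sum>a<card I. x a * Y $$ (a, i))" for i
  have Cv: "(\<Sum>j<n. C $$ (i, j) * v j) = q i" if i: "i < n" for i
  proof -
    have "(\<Sum>j<n. C $$ (i, j) * v j) = (\<Sum>j<n. \<Sum>a<card I. x a * (C $$ (i, j) * W $$ (a, j)))"
      unfolding v_def by (simp add: sum_distrib_left algebra_simps)
    also have "\<dots> = (\<Sum>a<card I. \<Sum>j<n. x a * (C $$ (i, j) * W $$ (a, j)))"
      by (rule sum.swap)
    also have "\<dots> = q i"
      unfolding q_def using xcov_index[OF _ i] by (simp add: sum_distrib_left)
    finally show ?thesis .
  qed
  have "quad_form n C v = (\<Sum>i<n. \<Sum>a<card I. x a * (W $$ (a, i) * q i))"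
    unfolding quad_form_def using Cv by (simp add: v_def sum_distrib_right mult.assoc)
  also have "\<dots> = (\<Sum>a<card I. x a * (\<Sum>i<n. W $$ (a, i) * q i))"
    by (subst sum.swap) (simp add: sum_distrib_left)
  also have "\<dots> = (\<Sum>a<card I. x a * q (pick I a))"
    using sum_innov[of _ q] xcov_eq_0 unfolding q_def by simp
  also have "\<dots> = (\<Sum>a<card I. \<Sum>a'<card I. x a * (x a' * V $$ (a', a)))"
    unfolding q_def using xcov_pick by (simp add: sum_distrib_left)
  also have "\<dots> = (\<Sum>a'<card I. x a' * (\<Sum>a<card I. V $$ (a', a) * x a))"
    by (subst sum.swap) (simp add: sum_distrib_left algebra_simps)
  also have "\<dots> = 0" using x by simp
  finally have "v (pick I b) = 0"
    using pos_def_mat_quad_form_eq_0[OF pd _ pick_I_less[OF b]] by simp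
  moreover have "v (pick I b) = (\<Sum>a<card I. if b = a then x a else 0)"
    unfolding v_def using innov_pick[OF _ b] by (intro sum.cong) auto
  ultimately show ?thesis using b by simp
qed

lemma xcov_kernel:
  assumes f: "\<And>a. a < card I \<Longrightarrow> (\<Sum>l<n. f l * Y $$ (a, l)) = 0"
    and supp: "\<And>l. l < n \<Longrightarrow> l \<notin> I \<Longrightarrow> l \<notin> S \<Longrightarrow> f l = 0"
    and b: "b < card I"
  shows "f (pick I b) = 0"
proof (rule cov_kernel[OF _ b])
  fix a assume a: "a < card I"
  have "(\<Sum>l<n. f l * Y $$ (a, l)) = (\<Sum>b<card I. f (pick I b) * V $$ (a, b))"
  proof (rule sum_xcov[OF a])
    fix l assume "l < n" "l \<notin> I"
    then show "f l * Y $$ (a, l) = 0"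
      using supp xcov_eq_0[OF a] by (cases "l \<in> S") auto
  qed
  then show "(\<Sum>b<card I. V $$ (a, b) * f (pick I b)) = 0"
    using f[OF a] by (simp add: mult.commute)
qed

end

lemma cond_gain_eqI:
  assumes A: "gauss_cond n C1 S I" and B: "gauss_cond n C2 S I"
    and eq: "\<And>a j. a < card I \<Longrightarrow> j \<in> S \<Longrightarrow> cond_gain C1 I S $$ (a, j) = cond_gain C2 I S $$ (a, j)"
  shows "cond_gain C1 I S = cond_gain C2 I S"
proof (rule eq_matI)
  fix a j assume "a < dim_row (cond_gain C2 I S)" "j < dim_col (cond_gain C2 I S)"
  then have a: "a < card I" and j: "j < n" using gauss_cond.gain_carrier[OF B] by auto
  show "cond_gain C1 I S $$ (a, j) = cond_gain C2 I S $$ (a, j)"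
    using eq[OF a] gauss_cond.gain_eq_0[OF A a j] gauss_cond.gain_eq_0[OF B a j] by (cases "j \<in> S") auto
qed (use gauss_cond.gain_carrier[OF A] gauss_cond.gain_carrier[OF B] in auto)

text \<open>Uniqueness for the system C^-1 Y' = W' restricted to the rows T, with Y known off T.\<close>
lemma innov_xcov_eq_if_precision_rows_eq:
  assumes A: "gauss_cond n C1 S I" and B: "gauss_cond n C2 S I"
    and xcov_off: "\<And>l. l < n \<Longrightarrow> l \<notin> T \<Longrightarrow> innov_xcov C1 I S $$ (a, l) = innov_xcov C2 I S $$ (a, l)"
    and rows: "\<And>t l. t < n \<Longrightarrow> l < n \<Longrightarrow> t \<in> T \<Longrightarrow> minv C1 $$ (t, l) = minv C2 $$ (t, l)"
    and gain: "\<And>t. t < n \<Longrightarrow> t \<in> T \<Longrightarrow> cond_gain C1 I S $$ (a, t) = cond_gain C2 I S $$ (a, t)"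
    and a: "a < card I" and l: "l < n"
  shows "innov_xcov C1 I S $$ (a, l) = innov_xcov C2 I S $$ (a, l)"
proof -
  interpret A: gauss_cond n C1 S I by (rule A)
  interpret B: gauss_cond n C2 S I by (rule B)
  let ?u = "\<lambda>l. innov_xcov C1 I S $$ (a, l) - innov_xcov C2 I S $$ (a, l)"
  have "?u l = 0"
  proof (rule pos_def_mat_supported_kernel[OF pos_def_mat_minv[OF A.pd] _ _ l])
    show "?u j = 0" if "j < n" "j \<notin> T" for j
      using xcov_off that by simp
    fix t assume t: "t < n" "t \<in> T"
    have "(\<Sum>l<n. minv C1 $$ (t, l) * ?u l) =
        (\<Sum>l<n. minv C1 $$ (t, l) * innov_xcov C1 I S $$ (a, l)) -
        (\<Sum>l<n. minv C2 $$ (t, l) * innov_xcov C2 I S $$ (a, l))"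
      using rows[OF t(1) _ t(2)] by (simp add: algebra_simps sum_subtractf)
    also have "\<dots> = 0"
      using A.precision_xcov[OF a t(1)] B.precision_xcov[OF a t(1)]
        A.innov_index[OF a t(1)] B.innov_index[OF a t(1)] gain[OF t] by simp
    finally show "(\<Sum>l<n. minv C1 $$ (t, l) * ?u l) = 0" .
  qed
  then show ?thesis by simp
qed

lemma cond_law_eq_if_precision_rows_eq:
  assumes A: "gauss_cond n C1 S I" and B: "gauss_cond n C2 S I"
    and rows: "\<And>i j. i < n \<Longrightarrow> j < n \<Longrightarrow> i \<notin> S \<Longrightarrow> minv C1 $$ (i, j) = minv C2 $$ (i, j)"
  shows "cond_gain C1 I S = cond_gain C2 I S \<and> cond_cov C1 I S = cond_cov C2 I S"
proof -
  interpret A: gauss_cond n C1 S I by (rule A)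
  interpret B: gauss_cond n C2 S I by (rule B)
  have xcov: "innov_xcov C1 I S $$ (a, l) = innov_xcov C2 I S $$ (a, l)"
    if a: "a < card I" and l: "l < n" for a l
  proof (rule innov_xcov_eq_if_precision_rows_eq[OF A B _ _ _ a l, of "- S"])
    show "innov_xcov C1 I S $$ (a, s) = innov_xcov C2 I S $$ (a, s)" if "s \<notin> - S" for s
      using A.xcov_eq_0[OF a] B.xcov_eq_0[OF a] that by simp
    show "cond_gain C1 I S $$ (a, t) = cond_gain C2 I S $$ (a, t)" if "t < n" "t \<in> - S" for t
      using A.gain_eq_0[OF a] B.gain_eq_0[OF a] that by simp
  qed (use rows in simp)
  have "cond_gain C1 I S = cond_gain C2 I S"
  proof (rule cond_gain_eqI[OF A B])
    fix a j assume a: "a < card I" and "j \<in> S"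
    then have j: "j < n" using A.S_sub by auto
    have "(\<Sum>l\<in>{..<n} - S. minv C1 $$ (l, j) * innov_xcov C1 I S $$ (a, l)) =
        (\<Sum>l\<in>{..<n} - S. minv C2 $$ (l, j) * innov_xcov C2 I S $$ (a, l))"
      using rows[OF _ j] xcov[OF a] by (intro sum.cong) auto
    then show "cond_gain C1 I S $$ (a, j) = cond_gain C2 I S $$ (a, j)"
      using A.gain_index[OF a j] B.gain_index[OF a j] by simp
  qed
  moreover have "cond_cov C1 I S = cond_cov C2 I S"
  proof (rule eq_matI)
    fix a b assume "a < dim_row (cond_cov C2 I S)" "b < dim_col (cond_cov C2 I S)"
    then have a: "a < card I" and b: "b < card I" using B.cov_carrier by auto
    show "cond_cov C1 I S $$ (a, b) = cond_cov C2 I S $$ (a, b)"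
      using A.xcov_pick[OF a b] B.xcov_pick[OF a b] xcov[OF a A.pick_I_less[OF b]] by simp
  qed (use A.cov_carrier B.cov_carrier in auto)
  ultimately show ?thesis ..
qed

lemma precision_rows_eq_if_cond_law_eq:
  assumes A: "gauss_cond n C1 S I" and B: "gauss_cond n C2 S I"
    and gain: "cond_gain C1 I S = cond_gain C2 I S" and cov: "cond_cov C1 I S = cond_cov C2 I S"
    and rows: "\<And>i j. i < n \<Longrightarrow> j < n \<Longrightarrow> i \<notin> S \<Longrightarrow> i \<notin> I \<Longrightarrow> minv C1 $$ (i, j) = minv C2 $$ (i, j)"
    and i: "i \<in> I" and j: "j < n"
  shows "minv C1 $$ (i, j) = minv C2 $$ (i, j)"
proof -
  interpret A: gauss_cond n C1 S I by (rule A)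
  interpret B: gauss_cond n C2 S I by (rule B)
  have xcov: "innov_xcov C1 I S $$ (a, l) = innov_xcov C2 I S $$ (a, l)" if a: "a < card I" and "l < n" for a l
  proof (rule innov_xcov_eq_if_precision_rows_eq[OF A B _ rows, of "- (S \<union> I)"])
    fix l assume "l < n" "l \<notin> - (S \<union> I)"
    then consider "l \<in> S" | "l \<in> I" by blast
    then show "innov_xcov C1 I S $$ (a, l) = innov_xcov C2 I S $$ (a, l)"
    proof cases
      case 1
      then show ?thesis using A.xcov_eq_0[OF a] B.xcov_eq_0[OF a] by simp
    next
      case 2
      then obtain b where "b < card I" "l = pick I b" by (rule A.obtain_pick_I)
      then show ?thesis using A.xcov_pick[OF a] B.xcov_pick[OF a] cov by simp
    qed
  qed (use gain that in auto)
  obtain b where b: "b < card I" "i = pick I b" using A.obtain_pick_I[OF i] .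
  have "minv C1 $$ (j, pick I b) - minv C2 $$ (j, pick I b) = 0"
  proof (rule A.xcov_kernel[OF _ _ b(1), of "\<lambda>l. minv C1 $$ (j, l) - minv C2 $$ (j, l)"])
    fix a assume a: "a < card I"
    have "(\<Sum>l<n. (minv C1 $$ (j, l) - minv C2 $$ (j, l)) * innov_xcov C1 I S $$ (a, l)) =
        (\<Sum>l<n. minv C1 $$ (j, l) * innov_xcov C1 I S $$ (a, l)) -
        (\<Sum>l<n. minv C2 $$ (j, l) * innov_xcov C2 I S $$ (a, l))"
      using xcov[OF a] by (simp add: algebra_simps sum_subtractf)
    then show "(\<Sum>l<n. (minv C1 $$ (j, l) - minv C2 $$ (j, l)) * innov_xcov C1 I S $$ (a, l)) = 0"
      using A.precision_xcov[OF a j] B.precision_xcov[OF a j] gain by simp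
  next
    fix l assume "l < n" "l \<notin> I" "l \<notin> S"
    then show "minv C1 $$ (j, l) - minv C2 $$ (j, l) = 0"
      using rows[of l j] j A.precision_sym[OF j] B.precision_sym[OF j] by simp
  qed
  then show ?thesis
    using b A.precision_sym[OF _ j] B.precision_sym[OF _ j] A.pick_I_less by simp
qed

lemma precision_eq_0_if_gain_col_eq_0:
  assumes "gauss_cond n C S I" and cover: "\<And>l. l < n \<Longrightarrow> l \<notin> S \<Longrightarrow> l \<in> I"
    and j: "j \<in> S" and gain: "\<And>a. a < card I \<Longrightarrow> cond_gain C I S $$ (a, j) = 0" and i: "i \<in> I"
  shows "minv C $$ (i, j) = 0"
proof -
  interpret gauss_cond n C S I by fact
  have jn: "j < n" using j S_sub by auto
  obtain b where b: "b < card I" "i = pick I b" using obtain_pick_I[OF i] .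
  have "minv C $$ (j, pick I b) = 0"
  proof (rule xcov_kernel[OF _ _ b(1)])
    fix a assume a: "a < card I"
    show "(\<Sum>l<n. minv C $$ (j, l) * innov_xcov C I S $$ (a, l)) = 0"
      using precision_xcov[OF a jn] innov_index[OF a jn] gain[OF a] pick_I_notin_S[OF a] j by auto
  qed (use cover in auto)
  then show ?thesis
    using b precision_sym[OF _ jn] pick_I_less by simp
qed

section \<open>Reciprocal sequences\<close>

lemma mem_blk_iff: "i \<in> blk d k \<longleftrightarrow> 0 < d \<and> i div d = k"
proof (cases "d = 0")
  case False
  then show ?thesis
    unfolding blk_def using div_nat_eqI[of d k i] div_times_less_eq_dividend[of i d]
      dividend_less_div_times[of d i] by (auto simp: mult.commute)
qed (simp add: blk_def)

lemma mem_blks_iff: "i \<in> blks d K \<longleftrightarrow> 0 < d \<and> i div d \<in> K"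
  unfolding blks_def using mem_blk_iff by auto

lemma less_Suc_mult_iff: "i < Suc N * d \<longleftrightarrow> 0 < d \<and> i div d \<le> N"
  using div_less_iff_less_mult[of d i "Suc N"] by (cases "d = 0") auto

lemma blks_subset: "K \<subseteq> {..N} \<Longrightarrow> blks d K \<subseteq> {..<Suc N * d}"
  unfolding subset_eq lessThan_iff less_Suc_mult_iff by (auto simp: mem_blks_iff)

lemma blk_subset: "k \<le> N \<Longrightarrow> blk d k \<subseteq> {..<Suc N * d}"
  unfolding subset_eq lessThan_iff less_Suc_mult_iff by (auto simp: mem_blk_iff)

lemma gauss_cond_blocks:
  assumes "gauss_cov N d C" "K \<subseteq> {..N}" "k \<le> N" "k \<notin> K"
  shows "gauss_cond (Suc N * d) C (blks d K) (blk d k)"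
  using assms blks_subset blk_subset
  by unfold_locales (auto simp: gauss_cov_iff_pos_def_mat mem_blk_iff mem_blks_iff)

lemma reciprocal_gain_eq:
  assumes "reciprocal N d C" "j < k" "k < l" "l \<le> N"
  shows "cond_gain C (blk d k) (blks d ({0..j} \<union> {l..N})) = cond_gain C (blk d k) (blks d {j, l})"
  using assms unfolding reciprocal_def same_cond_dist_def by blast

text \<open>By reciprocity the gain of x_k given all other blocks equals the gain given x_(k-1) and
  x_(k+1), whose columns vanish outside these two blocks.\<close>
lemma reciprocal_precision_eq_0:
  assumes g: "gauss_cov N d C" and r: "reciprocal N d C"
    and i: "i < Suc N * d" and j: "j < Suc N * d" and k: "1 \<le> i div d" "i div d < N"
    and far: "j div d + 2 \<le> i div d \<or> i div d + 2 \<le> j div d"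
  shows "minv C $$ (i, j) = 0"
proof -
  define k where "k = i div d"
  let ?S = "blks d ({0..k - 1} \<union> {k + 1..N})" and ?S' = "blks d {k - 1, k + 1}" and ?I = "blk d k"
  have d: "0 < d" and jN: "j div d \<le> N" using j unfolding less_Suc_mult_iff by auto
  have cond: "gauss_cond (Suc N * d) C ?S ?I"
    by (rule gauss_cond_blocks[OF g]) (use k in \<open>auto simp: k_def\<close>)
  have cond': "gauss_cond (Suc N * d) C ?S' ?I"
    by (rule gauss_cond_blocks[OF g]) (use k in \<open>auto simp: k_def\<close>)
  have gain: "cond_gain C ?I ?S = cond_gain C ?I ?S'"
    using reciprocal_gain_eq[OF r, of "k - 1" k "k + 1"] k unfolding k_def by simp
  show ?thesis
  proof (rule precision_eq_0_if_gain_col_eq_0[OF cond])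
    show "l \<in> ?I" if "l < Suc N * d" "l \<notin> ?S" for l
      using that d unfolding less_Suc_mult_iff by (auto simp: mem_blk_iff mem_blks_iff)
    show "j \<in> ?S" using far d jN by (auto simp: mem_blks_iff k_def)
    show "cond_gain C ?I ?S $$ (a, j) = 0" if "a < card ?I" for a
    proof -
      have "j \<notin> ?S'" using far by (auto simp: mem_blks_iff k_def)
      then show ?thesis using gauss_cond.gain_eq_0[OF cond' that j] gain by simp
    qed
    show "i \<in> ?I" using d by (simp add: mem_blk_iff k_def)
  qed
qed

lemma gauss_cov_precision: "gauss_cov N d C \<Longrightarrow> pos_def_mat (Suc N * d) (minv C)"
  unfolding gauss_cov_iff_pos_def_mat by (rule pos_def_mat_minv)

lemma precision_block_eq_iff:
  assumes g1: "gauss_cov N d C1" and g2: "gauss_cov N d C2" and "k \<le> N" "q \<le> N"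
  shows "submatrix (minv C1) (blk d k) (blk d q) = submatrix (minv C2) (blk d k) (blk d q) \<longleftrightarrow>
    (\<forall>i \<in> blk d k. \<forall>j \<in> blk d q. minv C1 $$ (i, j) = minv C2 $$ (i, j))"
proof -
  note P1 = pos_def_mat_carrier[OF gauss_cov_precision[OF g1]]
    and P2 = pos_def_mat_carrier[OF gauss_cov_precision[OF g2]]
  show ?thesis
    using submatrix_eqD[OF P1 P2 blk_subset[OF assms(3)] blk_subset[OF assms(4)]]
      submatrix_eqI[OF P1 P2 blk_subset[OF assms(3)] blk_subset[OF assms(4)]] by blast
qed

lemma same_reciprocal_model_precision_eq:
  assumes g1: "gauss_cov N d C1" and g2: "gauss_cov N d C2"
    and r1: "reciprocal N d C1" and r2: "reciprocal N d C2"
    and m: "same_reciprocal_model N d C1 C2"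
    and i: "i < Suc N * d" and j: "j < Suc N * d" and k: "1 \<le> i div d" "i div d < N"
  shows "minv C1 $$ (i, j) = minv C2 $$ (i, j)"
proof -
  define k where "k = i div d"
  define q where "q = j div d"
  have d: "0 < d" and qN: "q \<le> N" using j unfolding q_def less_Suc_mult_iff by auto
  have iB: "i \<in> blk d k" and jB: "j \<in> blk d q" using d by (simp_all add: mem_blk_iff k_def q_def)
  have kN: "k \<le> N" using k unfolding k_def by simp
  have mk: "R0 d C1 k = R0 d C2 k" "Rplus d C1 k = Rplus d C2 k" "Rminus d C1 k = Rminus d C2 k"
    using m k unfolding same_reciprocal_model_def k_def by auto
  consider "q = k" | "q = Suc k" | "Suc q = k" | "q + 2 \<le> k \<or> k + 2 \<le> q" by linarith
  then show ?thesis
  proof cases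
    case 1
    then show ?thesis
      using mk(1) precision_block_eq_iff[OF g1 g2 kN kN] iB jB unfolding R0_def blockA_def by simp
  next
    case 2
    then have "submatrix (minv C1) (blk d k) (blk d q) = submatrix (minv C2) (blk d k) (blk d q)"
      using arg_cong[OF mk(2), of uminus] unfolding Rplus_def blockB_def by simp
    then show ?thesis using precision_block_eq_iff[OF g1 g2 kN qN] iB jB by simp
  next
    case 3
    then have "submatrix (minv C1) (blk d q) (blk d k) = submatrix (minv C2) (blk d q) (blk d k)"
      using arg_cong[OF mk(3), of "\<lambda>A. transpose_mat (- A)"] unfolding Rminus_def blockB_def
      by (simp add: 3[symmetric])
    then have "minv C1 $$ (j, i) = minv C2 $$ (j, i)"
      using precision_block_eq_iff[OF g1 g2 qN kN] iB jB by simp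
    then show ?thesis
      using pos_def_mat_sym[OF gauss_cov_precision[OF g1] i j] pos_def_mat_sym[OF gauss_cov_precision[OF g2] i j]
      by simp
  next
    case 4
    then show ?thesis
      using reciprocal_precision_eq_0[OF g1 r1 i j k] reciprocal_precision_eq_0[OF g2 r2 i j k] k_def q_def by simp
  qed
qed

lemma gauss_cond_CML:
  assumes "gauss_cov N d C" "k \<in> {1..N - 1}"
  shows "gauss_cond (Suc N * d) C (CML_cond N d k) (blk d k)"
  unfolding CML_cond_def by (rule gauss_cond_blocks) (use assms in auto)

lemma same_reciprocal_model_imp_same_CML_model:
  assumes g1: "gauss_cov N d C1" and g2: "gauss_cov N d C2"
    and r1: "reciprocal N d C1" and r2: "reciprocal N d C2"
    and m: "same_reciprocal_model N d C1 C2"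
  shows "same_CML_model N d C1 C2"
  unfolding same_CML_model_def
proof
  fix k assume k: "k \<in> {1..N - 1}"
  have "cond_gain C1 (blk d k) (CML_cond N d k) = cond_gain C2 (blk d k) (CML_cond N d k) \<and>
      cond_cov C1 (blk d k) (CML_cond N d k) = cond_cov C2 (blk d k) (CML_cond N d k)"
  proof (rule cond_law_eq_if_precision_rows_eq[OF gauss_cond_CML[OF g1 k] gauss_cond_CML[OF g2 k]])
    fix i j assume i: "i < Suc N * d" and j: "j < Suc N * d" and "i \<notin> CML_cond N d k"
    then have "1 \<le> i div d" "i div d < N"
      using k unfolding less_Suc_mult_iff by (auto simp: CML_cond_def mem_blks_iff)
    then show "minv C1 $$ (i, j) = minv C2 $$ (i, j)"
      using same_reciprocal_model_precision_eq[OF g1 g2 r1 r2 m i j] by simp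
  qed
  then show "G_prev N d C1 k = G_prev N d C2 k \<and> G_last N d C1 k = G_last N d C2 k \<and>
      G_cov N d C1 k = G_cov N d C2 k"
    unfolding G_prev_def G_last_def G_cov_def by simp
qed

text \<open>By reciprocity the CM_L gain at k has nonzero columns only in blocks k - 1 and N, which
  are exactly what G_prev and G_last record.\<close>
lemma same_CML_model_gain_eq:
  assumes g1: "gauss_cov N d C1" and g2: "gauss_cov N d C2"
    and r1: "reciprocal N d C1" and r2: "reciprocal N d C2"
    and m: "same_CML_model N d C1 C2" and k: "k \<in> {1..N - 1}"
  shows "cond_gain C1 (blk d k) (CML_cond N d k) = cond_gain C2 (blk d k) (CML_cond N d k)"
proof -
  let ?S = "blks d {k - 1, N}" and ?I = "blk d k"
  have k1: "1 \<le> k" and kN: "k < N" using k by auto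
  have S_eq: "blks d ({0..k - 1} \<union> {N..N}) = CML_cond N d k"
    using k1 unfolding CML_cond_def by (simp add: ivl_disj_un(2) atLeastLessThanSuc_atLeastAtMost[symmetric])
  have reduce: "cond_gain C ?I (CML_cond N d k) = cond_gain C ?I ?S" if "reciprocal N d C" for C
    using reciprocal_gain_eq[OF that, of "k - 1" k N] k1 kN S_eq by simp
  have cond1: "gauss_cond (Suc N * d) C1 ?S ?I"
    by (rule gauss_cond_blocks[OF g1]) (use k1 kN in auto)
  have cond2: "gauss_cond (Suc N * d) C2 ?S ?I"
    by (rule gauss_cond_blocks[OF g2]) (use k1 kN in auto)
  have "G_prev N d C1 k = G_prev N d C2 k" "G_last N d C1 k = G_last N d C2 k"
    using m k unfolding same_CML_model_def by auto
  then have prev: "submatrix (cond_gain C1 ?I ?S) UNIV (blk d (k - 1)) = submatrix (cond_gain C2 ?I ?S) UNIV (blk d (k - 1))"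
    and last: "submatrix (cond_gain C1 ?I ?S) UNIV (blk d N) = submatrix (cond_gain C2 ?I ?S) UNIV (blk d N)"
    unfolding G_prev_def G_last_def reduce[OF r1] reduce[OF r2] .
  note G1 = gauss_cond.gain_carrier[OF cond1] and G2 = gauss_cond.gain_carrier[OF cond2]
  have "cond_gain C1 ?I ?S = cond_gain C2 ?I ?S"
  proof (rule cond_gain_eqI[OF cond1 cond2])
    fix a j assume a: "a < card ?I" and "j \<in> ?S"
    then consider "j \<in> blk d (k - 1)" | "j \<in> blk d N" unfolding blks_def by auto
    then show "cond_gain C1 ?I ?S $$ (a, j) = cond_gain C2 ?I ?S $$ (a, j)"
      by cases (use submatrix_cols_eqD[OF G1 G2 blk_subset prev a] submatrix_cols_eqD[OF G1 G2 blk_subset last a]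
          kN in auto)
  qed
  then show ?thesis using reduce[OF r1] reduce[OF r2] by simp
qed

text \<open>Downward induction on k: the CM_L law at k together with the block rows k + 1, ..., N - 1
  determines block row k.\<close>
lemma same_CML_model_precision_eq:
  assumes g1: "gauss_cov N d C1" and g2: "gauss_cov N d C2"
    and r1: "reciprocal N d C1" and r2: "reciprocal N d C2"
    and m: "same_CML_model N d C1 C2"
  shows "k \<in> {1..N - 1} \<Longrightarrow> i \<in> blk d k \<Longrightarrow> j < Suc N * d \<Longrightarrow> minv C1 $$ (i, j) = minv C2 $$ (i, j)"
proof (induction "N - k" arbitrary: k i j rule: less_induct)
  case less
  note cond1 = gauss_cond_CML[OF g1 less.prems(1)] and cond2 = gauss_cond_CML[OF g2 less.prems(1)]
  have cov: "cond_cov C1 (blk d k) (CML_cond N d k) = cond_cov C2 (blk d k) (CML_cond N d k)"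
    using m less.prems(1) unfolding same_CML_model_def G_cov_def by blast
  show ?case
  proof (rule precision_rows_eq_if_cond_law_eq[OF cond1 cond2
        same_CML_model_gain_eq[OF g1 g2 r1 r2 m less.prems(1)] cov _ less.prems(2,3)])
    fix i' j' assume i': "i' < Suc N * d" "i' \<notin> CML_cond N d k" "i' \<notin> blk d k" and j': "j' < Suc N * d"
    then have "i' div d \<in> {1..N - 1}" "N - i' div d < N - k" "i' \<in> blk d (i' div d)"
      using less.prems(1) unfolding less_Suc_mult_iff by (auto simp: CML_cond_def mem_blks_iff mem_blk_iff)
    then show "minv C1 $$ (i', j') = minv C2 $$ (i', j')" using less.hyps j' by blast
  qed
qed

lemma same_CML_model_imp_same_reciprocal_model:
  assumes g1: "gauss_cov N d C1" and g2: "gauss_cov N d C2"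
    and r1: "reciprocal N d C1" and r2: "reciprocal N d C2"
    and m: "same_CML_model N d C1 C2"
  shows "same_reciprocal_model N d C1 C2"
  unfolding same_reciprocal_model_def
proof
  fix k assume k: "k \<in> {1..N - 1}"
  note rows = same_CML_model_precision_eq[OF g1 g2 r1 r2 m k]
  have le: "k - 1 \<le> N" "k \<le> N" "Suc k \<le> N" and row_bound: "j \<in> blk d m \<Longrightarrow> m \<le> N \<Longrightarrow> j < Suc N * d" for j m
    using k blk_subset[of m N d] by auto
  have "blockA d C1 k = blockA d C2 k" "blockB d C1 k = blockB d C2 k"
    unfolding blockA_def blockB_def using rows row_bound le
    by (simp_all add: precision_block_eq_iff[OF g1 g2])
  moreover have "blockB d C1 (k - 1) = blockB d C2 (k - 1)"
  proof -
    have "minv C1 $$ (i, j) = minv C2 $$ (i, j)" if "i \<in> blk d (k - 1)" "j \<in> blk d k" for i j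
      using rows[OF that(2) row_bound[OF that(1) le(1)]] row_bound[OF that(1) le(1)] row_bound[OF that(2) le(2)]
        pos_def_mat_sym[OF gauss_cov_precision[OF g1]] pos_def_mat_sym[OF gauss_cov_precision[OF g2]] by metis
    then show ?thesis
      unfolding blockB_def using k precision_block_eq_iff[OF g1 g2 le(1,2)] by simp
  qed
  ultimately show "R0 d C1 k = R0 d C2 k \<and> Rplus d C1 k = Rplus d C2 k \<and> Rminus d C1 k = Rminus d C2 k"
    unfolding R0_def Rplus_def Rminus_def by simp
qed

theorem proposition5:
  fixes N d :: nat and C1 C2 :: "real mat"
  assumes "gauss_cov N d C1" and "gauss_cov N d C2"
    and "reciprocal N d C1" and "reciprocal N d C2"
  shows "same_reciprocal_model N d C1 C2 \<longleftrightarrow> same_CML_model N d C1 C2"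
  using same_reciprocal_model_imp_same_CML_model[OF assms] same_CML_model_imp_same_reciprocal_model[OF assms]
  by blast

end
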